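(* Let $\alpha:A^{\Delta}\to(H,V)$ be a homomorphism into a finite forest algebra with $H$ idempotent and commutative, and let $\Gamma_1,\ldots,\Gamma_r$ be the subminimal reachability classes of $(H,V)$. Then $\alpha_{\Gamma_{\mathsf{min}}}:A^{\Delta}\to(H_{\Gamma_{\mathsf{min}}},V_{\Gamma_{\mathsf{min}}})$ factors through the direct product homomorphism $\prod_{j=1}^r\alpha_{\ge\Gamma_j}:A^{\Delta}\to\prod_{j=1}^r(H_{\ge\Gamma_j},V_{\ge\Gamma_j})$. Further, each of the algebras $(H_{\ge\Gamma_j},V_{\ge\Gamma_j})$ has a unique subminimal reachability class.
   Context: $A^{\Delta}=(H_A,V_A)$ is the free forest algebra of forests and contexts over $A$. A forest algebra $(H,V)$: additive monoid $H$, monoid $V$ acting faithfully on the left, containing $g\mapsto g+h$, $g\mapsto h+g$. With $H$ idempotent and commutative, the sum $\infty$ of all elements of $H$ is absorbing. $\beta$ factors through $\gamma$ if $\gamma(s)=\gamma(s')$ implies $\beta(s)=\beta(s')$ for forests $s,s'$. The direct product homomorphism sends $s$ to the tuple $(\alpha_{\ge\Gamma_1}(s),\ldots,\alpha_{\ge\Gamma_r}(s))$. Reachability: $h\le h'$ iff $h=vh'$ for some $v\in V$; reachability classes are the classes of mutual reachability, partially ordered by $\le$. $\Gamma_{\mathsf{min}}$ is the class of $\infty$ (the least class); a class $\Gamma$ is subminimal if $\Gamma_{\mathsf{min}}<\Gamma$ with no class strictly between. A reachability ideal $I$ is a downward closed subset of $H$; the quotient $\alpha_I:A^{\Delta}\to(H/I,V/I)$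 identifies forests $s,s'$ iff $\alpha(s)=\alpha(s')\notin I$ or $\alpha(s),\alpha(s')\in I$ (so $H/I=(H\setminus I)\cup\{\infty\}$), contexts being identified when they act identically. For a class $\Gamma$: $\alpha_\Gamma$, $(H_\Gamma,V_\Gamma)$ correspond to $I=\{h:h\not>\Gamma\}$, and $\alpha_{\ge\Gamma}$, $(H_{\ge\Gamma},V_{\ge\Gamma})$ to $I=\{h:h\not\ge\Gamma\}$. *)

theory Defs
  imports "HOL-Library.FuncSet"
begin

datatype 'a tree = Node 'a "'a tree list"
type_synonym 'a forest = "'a tree list"

text \<open>A context is a forest with exactly one hole (at a leaf):
  a left forest, a tree-or-hole containing the hole, and a right forest.\<close>
datatype 'a ctx = Ctx "'a tree list" "'a ctree" "'a tree list"
     and 'a ctree = CHole | CNode 'a "'a ctx"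

fun fill :: "'a ctx \<Rightarrow> 'a forest \<Rightarrow> 'a forest"
and fillt :: "'a ctree \<Rightarrow> 'a forest \<Rightarrow> 'a forest" where
  "fill (Ctx l t r) s = l @ fillt t s @ r"
| "fillt CHole s = s"
| "fillt (CNode a c) s = [Node a (fill c s)]"

fun ctx_comp :: "'a ctx \<Rightarrow> 'a ctx \<Rightarrow> 'a ctx" where
  "ctx_comp (Ctx l CHole r) q = (case q of Ctx l' t' r' \<Rightarrow> Ctx (l @ l') t' (r' @ r))"
| "ctx_comp (Ctx l (CNode a c) r) q = Ctx l (CNode a (ctx_comp c q)) r"

definition ctx_id :: "'a ctx" where "ctx_id = Ctx [] CHole []"

definition ctx_addl :: "'a forest \<Rightarrow> 'a ctx \<Rightarrow> 'a ctx" where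
  "ctx_addl s p = (case p of Ctx l t r \<Rightarrow> Ctx (s @ l) t r)"

definition ctx_addr :: "'a ctx \<Rightarrow> 'a forest \<Rightarrow> 'a ctx" where
  "ctx_addr p s = (case p of Ctx l t r \<Rightarrow> Ctx l t (r @ s))"

section \<open>Forest algebras (V represented as a monoid of transformations of H)\<close>

definition forest_algebra :: "'h set \<Rightarrow> ('h \<Rightarrow> 'h \<Rightarrow> 'h) \<Rightarrow> 'h \<Rightarrow> ('h \<Rightarrow> 'h) set \<Rightarrow> bool" where
  "forest_algebra H pl z V \<longleftrightarrow>
     z \<in> H \<and> (\<forall>x\<in>H. \<forall>y\<in>H. pl x y \<in> H)
   \<and> (\<forall>x\<in>H. \<forall>y\<in>H. \<forall>w\<in>H. pl (pl x y) w = pl x (pl y w))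
   \<and> (\<forall>x\<in>H. pl z x = x \<and> pl x z = x)
   \<and> V \<subseteq> (H \<rightarrow>\<^sub>E H)
   \<and> restrict id H \<in> V
   \<and> (\<forall>v\<in>V. \<forall>w\<in>V. compose H v w \<in> V)
   \<and> (\<forall>h\<in>H. restrict (\<lambda>g. pl g h) H \<in> V \<and> restrict (\<lambda>g. pl h g) H \<in> V)"

definition forest_hom ::
  "('a forest \<Rightarrow> 'h) \<Rightarrow> ('a ctx \<Rightarrow> ('h \<Rightarrow> 'h)) \<Rightarrow> 'h set \<Rightarrow> ('h \<Rightarrow> 'h \<Rightarrow> 'h) \<Rightarrow> 'h \<Rightarrow> ('h \<Rightarrow> 'h) set \<Rightarrow> bool" where
  "forest_hom aH aV H pl z V \<longleftrightarrow>
     (\<forall>s. aH s \<in> H) \<and> (\<forall>p. aV p \<in> V)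
   \<and> aH [] = z \<and> (\<forall>s t. aH (s @ t) = pl (aH s) (aH t))
   \<and> aV ctx_id = restrict id H
   \<and> (\<forall>p q. aV (ctx_comp p q) = compose H (aV p) (aV q))
   \<and> (\<forall>p s. aH (fill p s) = aV p (aH s))
   \<and> (\<forall>s p. aV (ctx_addl s p) = compose H (restrict (\<lambda>g. pl (aH s) g) H) (aV p))
   \<and> (\<forall>p s. aV (ctx_addr p s) = compose H (restrict (\<lambda>g. pl g (aH s)) H) (aV p))"

definition infty :: "'h set \<Rightarrow> ('h \<Rightarrow> 'h \<Rightarrow> 'h) \<Rightarrow> 'h \<Rightarrow> 'h" where
  "infty H pl z = Finite_Set.fold pl z H"

definition reach :: "('h \<Rightarrow> 'h) set \<Rightarrow> 'h \<Rightarrow> 'h \<Rightarrow> bool" where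
  "reach V h h' \<longleftrightarrow> (\<exists>v\<in>V. h = v h')"   \<comment> \<open>h \<le> h'\<close>

definition rclass :: "'h set \<Rightarrow> ('h \<Rightarrow> 'h) set \<Rightarrow> 'h \<Rightarrow> 'h set" where
  "rclass H V h = {g \<in> H. reach V g h \<and> reach V h g}"

definition is_rclass :: "'h set \<Rightarrow> ('h \<Rightarrow> 'h) set \<Rightarrow> 'h set \<Rightarrow> bool" where
  "is_rclass H V C \<longleftrightarrow> (\<exists>h\<in>H. C = rclass H V h)"

definition class_le :: "('h \<Rightarrow> 'h) set \<Rightarrow> 'h set \<Rightarrow> 'h set \<Rightarrow> bool" where
  "class_le V C D \<longleftrightarrow> (\<exists>c\<in>C. \<exists>d\<in>D. reach V c d)"

definition class_lt :: "('h \<Rightarrow> 'h) set \<Rightarrow> 'h set \<Rightarrow> 'h set \<Rightarrow> bool" where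
  "class_lt V C D \<longleftrightarrow> class_le V C D \<and> C \<noteq> D"

definition Gmin :: "'h set \<Rightarrow> ('h \<Rightarrow> 'h \<Rightarrow> 'h) \<Rightarrow> 'h \<Rightarrow> ('h \<Rightarrow> 'h) set \<Rightarrow> 'h set" where
  "Gmin H pl z V = rclass H V (infty H pl z)"

definition subminimal :: "'h set \<Rightarrow> ('h \<Rightarrow> 'h \<Rightarrow> 'h) \<Rightarrow> 'h \<Rightarrow> ('h \<Rightarrow> 'h) set \<Rightarrow> 'h set \<Rightarrow> bool" where
  "subminimal H pl z V C \<longleftrightarrow>
     is_rclass H V C \<and> class_lt V (Gmin H pl z V) C
   \<and> \<not> (\<exists>D. is_rclass H V D \<and> class_lt V (Gmin H pl z V) D \<and> class_lt V D C)"

definition qmap :: "'h set \<Rightarrow> ('h \<Rightarrow> 'h \<Rightarrow> 'h) \<Rightarrow> 'h \<Rightarrow> 'h set \<Rightarrow> 'h \<Rightarrow> 'h" where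
  "qmap H pl z I h = (if h \<in> I then infty H pl z else h)"

definition quot_H :: "'h set \<Rightarrow> ('h \<Rightarrow> 'h \<Rightarrow> 'h) \<Rightarrow> 'h \<Rightarrow> 'h set \<Rightarrow> 'h set" where
  "quot_H H pl z I = (H - I) \<union> {infty H pl z}"

definition quot_plus :: "'h set \<Rightarrow> ('h \<Rightarrow> 'h \<Rightarrow> 'h) \<Rightarrow> 'h \<Rightarrow> 'h set \<Rightarrow> 'h \<Rightarrow> 'h \<Rightarrow> 'h" where
  "quot_plus H pl z I x y = qmap H pl z I (pl x y)"

definition quot_zero :: "'h set \<Rightarrow> ('h \<Rightarrow> 'h \<Rightarrow> 'h) \<Rightarrow> 'h \<Rightarrow> 'h set \<Rightarrow> 'h" where
  "quot_zero H pl z I = qmap H pl z I z"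

text \<open>Contexts acting identically on H/I are identified: V/I is the set of induced maps on H/I.\<close>
definition quot_V :: "'h set \<Rightarrow> ('h \<Rightarrow> 'h \<Rightarrow> 'h) \<Rightarrow> 'h \<Rightarrow> 'h set \<Rightarrow> ('h \<Rightarrow> 'h) set \<Rightarrow> ('h \<Rightarrow> 'h) set" where
  "quot_V H pl z I V = (\<lambda>v. restrict (\<lambda>h. qmap H pl z I (v h)) (quot_H H pl z I)) ` V"

definition I_gt :: "'h set \<Rightarrow> ('h \<Rightarrow> 'h) set \<Rightarrow> 'h set \<Rightarrow> 'h set" where
  "I_gt H V C = {h \<in> H. \<not> (\<exists>g\<in>C. reach V g h \<and> \<not> reach V h g)}"

definition I_ge :: "'h set \<Rightarrow> ('h \<Rightarrow> 'h) set \<Rightarrow> 'h set \<Rightarrow> 'h set" where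
  "I_ge H V C = {h \<in> H. \<not> (\<exists>g\<in>C. reach V g h)}"

definition alpha_quot :: "'h set \<Rightarrow> ('h \<Rightarrow> 'h \<Rightarrow> 'h) \<Rightarrow> 'h \<Rightarrow> 'h set \<Rightarrow> ('a forest \<Rightarrow> 'h) \<Rightarrow> 'a forest \<Rightarrow> 'h" where
  "alpha_quot H pl z I aH s = qmap H pl z I (aH s)"

definition factors_through :: "('a forest \<Rightarrow> 'b) \<Rightarrow> ('a forest \<Rightarrow> 'c) \<Rightarrow> bool" where
  "factors_through \<beta> \<gamma> \<longleftrightarrow> (\<forall>s s'. \<gamma> s = \<gamma> s' \<longrightarrow> \<beta> s = \<beta> s')"

end

theory Submission
  imports Defs
begin

text \<open>
  In a finite idempotent commutative forest algebra every h outside the least class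
  \<Gamma>_min lies above some subminimal class \<Gamma> (take an element below h and outside
  \<Gamma>_min with the fewest elements below it). Then h survives the quotient by
  {g. g \<not>\<ge> \<Gamma>}, so the family of these quotients separates h from every other
  element; this is the factorisation. In the quotient by {g. g \<not>\<ge> \<Gamma>} the
  reachability order is the original one restricted to the elements above \<Gamma>, plus the
  new bottom \<infinity>, so \<Gamma> is its only subminimal class.
\<close>

lemma fold_left_idem_absorbing:
  assumes "finite S" "z \<in> S" "\<forall>x\<in>S. \<forall>y\<in>S. p x y \<in> S"
    and left_comm: "\<forall>x\<in>S. \<forall>y\<in>S. \<forall>b\<in>S. p x (p y b) = p y (p x b)"
    and left_idem: "\<forall>x\<in>S. \<forall>b\<in>S. p x (p x b) = p x b"
  shows "Finite_Set.fold p z S \<in> S" "\<forall>a\<in>S. p a (Finite_Set.fold p z S) = Finite_Set.fold p z S"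
proof -
  \<comment> \<open>p is left-commutative only on S; g agrees with p there and is the identity elsewhere\<close>
  define g where "g a b = (if b \<in> S then p a b else b)" for a b
  interpret comp_fun_commute_on S g
    by unfold_locales (use assms(3) left_comm in \<open>auto simp: g_def fun_eq_iff\<close>)
  have fold_eq: "Finite_Set.fold p z S = Finite_Set.fold g z S"
    by (rule fold_closed_eq[where B=S]) (use assms in \<open>auto simp: g_def\<close>)
  have "Finite_Set.fold g z A \<in> S \<and> (\<forall>a\<in>A. p a (Finite_Set.fold g z A) = Finite_Set.fold g z A)"
    if "A \<subseteq> S" for A
    using finite_subset[OF that assms(1)] that
  proof (induction A rule: finite_induct)
    case (insert x A)
    then have IH: "Finite_Set.fold g z A \<in> S" "\<forall>a\<in>A. p a (Finite_Set.fold g z A) = Finite_Set.fold g z A"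
      and "x \<in> S" by auto
    with insert have "Finite_Set.fold g z (insert x A) = p x (Finite_Set.fold g z A)"
      by (simp add: g_def)
    with IH \<open>x \<in> S\<close> insert.prems assms(3) left_comm left_idem show ?case
      by (metis insert_iff subsetD)
  qed (use assms(2) in simp)
  then show "Finite_Set.fold p z S \<in> S" "\<forall>a\<in>S. p a (Finite_Set.fold p z S) = Finite_Set.fold p z S"
    by (simp_all add: fold_eq)
qed

locale reach_preorder =
  fixes K :: "'h set" and W :: "('h \<Rightarrow> 'h) set"
  assumes reach_refl: "h \<in> K \<Longrightarrow> reach W h h"
    and reach_trans: "reach W a b \<Longrightarrow> reach W b d \<Longrightarrow> a \<in> K \<Longrightarrow> b \<in> K \<Longrightarrow> d \<in> K \<Longrightarrow> reach W a d"
begin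

lemma rclass_eq_iff:
  assumes "x \<in> K" "y \<in> K"
  shows "rclass K W x = rclass K W y \<longleftrightarrow> reach W x y \<and> reach W y x"
  using assms reach_refl reach_trans unfolding rclass_def by blast

lemma class_le_rclass_iff:
  assumes "x \<in> K" "y \<in> K"
  shows "class_le W (rclass K W x) (rclass K W y) \<longleftrightarrow> reach W x y"
  using assms reach_refl reach_trans unfolding class_le_def rclass_def by blast

lemma class_lt_rclass_iff:
  assumes "x \<in> K" "y \<in> K"
  shows "class_lt W (rclass K W x) (rclass K W y) \<longleftrightarrow> reach W x y \<and> \<not> reach W y x"
  using assms by (auto simp: class_lt_def class_le_rclass_iff rclass_eq_iff)

lemma mem_I_ge_rclass_iff:
  assumes "c \<in> K" "h \<in> K"
  shows "h \<in> I_ge K W (rclass K W c) \<longleftrightarrow> \<not> reach W c h"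
  using assms reach_refl reach_trans unfolding I_ge_def rclass_def by blast

lemma I_ge_downward_closed:
  assumes "reach W a b" "b \<in> I_ge K W C" "a \<in> K" "C \<subseteq> K"
  shows "a \<in> I_ge K W C"
  using assms reach_trans unfolding I_ge_def by blast

end

locale reach_preorder_bottom = reach_preorder +
  fixes e :: 'h
  assumes bottom_in: "e \<in> K"
    and reach_bottom: "h \<in> K \<Longrightarrow> reach W e h"
begin

definition minimal_above_bottom :: "'h \<Rightarrow> bool" where
  "minimal_above_bottom c \<longleftrightarrow>
     c \<in> K \<and> \<not> reach W c e \<and> (\<forall>y\<in>K. reach W y c \<longrightarrow> reach W y e \<or> reach W c y)"

lemma subminimal_rclass_iff:
  assumes "Gmin K pl z W = rclass K W e" "c \<in> K"
  shows "subminimal K pl z W (rclass K W c) \<longleftrightarrow> minimal_above_bottom c"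
proof -
  have above_bottom: "class_lt W (rclass K W e) (rclass K W y) \<longleftrightarrow> \<not> reach W y e" if "y \<in> K" for y
    using class_lt_rclass_iff[OF bottom_in that] reach_bottom that by blast
  have "(\<exists>D. is_rclass K W D \<and> class_lt W (rclass K W e) D \<and> class_lt W D (rclass K W c))
      \<longleftrightarrow> (\<exists>y\<in>K. \<not> reach W y e \<and> reach W y c \<and> \<not> reach W c y)"
    using class_lt_rclass_iff[OF _ assms(2)] above_bottom by (auto simp: is_rclass_def)
  then show ?thesis
    using assms above_bottom by (auto simp: subminimal_def minimal_above_bottom_def is_rclass_def)
qed

lemma subminimal_iff:
  assumes "Gmin K pl z W = rclass K W e"
  shows "subminimal K pl z W D \<longleftrightarrow> (\<exists>c. minimal_above_bottom c \<and> D = rclass K W c)"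
  using subminimal_rclass_iff[OF assms] unfolding minimal_above_bottom_def
  by (metis is_rclass_def subminimal_def)

lemma mem_I_gt_bottom_iff:
  assumes "h \<in> K"
  shows "h \<in> I_gt K W (rclass K W e) \<longleftrightarrow> reach W h e"
  using assms bottom_in reach_bottom reach_trans unfolding I_gt_def rclass_def by blast

lemma exists_minimal_above_bottom_below:
  assumes "finite K" "h \<in> K" "\<not> reach W h e"
  shows "\<exists>c. minimal_above_bottom c \<and> reach W c h"
proof -
  define T where "T = {y\<in>K. reach W y h \<and> \<not> reach W y e}"
  define down where "down y = card {g\<in>K. reach W g y}" for y
  have "h \<in> T" using assms reach_refl unfolding T_def by auto
  then obtain c where "c \<in> T" and c_least: "\<And>y. y \<in> T \<Longrightarrow> down c \<le> down y"
    using ex_has_least_nat[of "\<lambda>y. y \<in> T" h down] by blast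
  then have c: "c \<in> K" "reach W c h" "\<not> reach W c e" unfolding T_def by auto
  have "reach W y e \<or> reach W c y" if "y \<in> K" "reach W y c" for y
  proof (rule ccontr)
    assume "\<not> (reach W y e \<or> reach W c y)"
    then have "y \<in> T" and "{g\<in>K. reach W g y} \<subset> {g\<in>K. reach W g c}"
      using that c assms(2) reach_refl reach_trans unfolding T_def by blast+
    then have "down y < down c" "down c \<le> down y"
      using c_least \<open>finite K\<close> unfolding down_def by (auto intro: psubset_card_mono)
    then show False by simp
  qed
  with c show ?thesis unfolding minimal_above_bottom_def by blast
qed

end

locale idem_comm_forest_algebra =
  fixes H :: "'h set" and pl :: "'h \<Rightarrow> 'h \<Rightarrow> 'h" and z :: 'h and V :: "('h \<Rightarrow> 'h) set"
  assumes forest_algebra: "forest_algebra H pl z V"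
    and finite_carrier: "finite H"
    and plus_idem: "\<forall>x\<in>H. pl x x = x"
    and plus_comm: "\<forall>x\<in>H. \<forall>y\<in>H. pl x y = pl y x"
begin

lemma zero_in: "z \<in> H"
  and plus_closed: "\<forall>x\<in>H. \<forall>y\<in>H. pl x y \<in> H"
  and plus_assoc: "\<forall>x\<in>H. \<forall>y\<in>H. \<forall>w\<in>H. pl (pl x y) w = pl x (pl y w)"
  and id_in_actions: "restrict id H \<in> V"
  and compose_in_actions: "\<forall>v\<in>V. \<forall>w\<in>V. compose H v w \<in> V"
  and plus_actions: "\<forall>h\<in>H. restrict (\<lambda>g. pl g h) H \<in> V \<and> restrict (\<lambda>g. pl h g) H \<in> V"
  using forest_algebra unfolding forest_algebra_def by auto

lemma reach_plus: "a \<in> H \<Longrightarrow> x \<in> H \<Longrightarrow> reach V (pl x a) a"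
  using plus_actions unfolding reach_def by (metis restrict_apply')

sublocale reach_preorder H V
proof
  show "reach V h h" if "h \<in> H" for h
    using id_in_actions that unfolding reach_def by (metis id_apply restrict_apply')
  show "reach V a d" if "reach V a b" "reach V b d" "d \<in> H" for a b d
    using compose_in_actions that unfolding reach_def by (metis comp_apply compose_def restrict_apply')
qed

lemma plus_left_comm: "\<forall>x\<in>H. \<forall>y\<in>H. \<forall>b\<in>H. pl x (pl y b) = pl y (pl x b)"
  using plus_assoc plus_comm by metis

lemma plus_left_idem: "\<forall>x\<in>H. \<forall>b\<in>H. pl x (pl x b) = pl x b"
  using plus_assoc plus_idem by metis

abbreviation infinity :: 'h where
  "infinity \<equiv> infty H pl z"

lemma infinity_in: "infinity \<in> H"
  and plus_infinity: "a \<in> H \<Longrightarrow> pl a infinity = infinity"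
  using fold_left_idem_absorbing[OF finite_carrier zero_in plus_closed plus_left_comm plus_left_idem]
  unfolding infty_def by auto

lemma infinity_plus: "a \<in> H \<Longrightarrow> pl infinity a = infinity"
  using plus_comm plus_infinity infinity_in by metis

sublocale reach_preorder_bottom H V infinity
proof
  show "reach V infinity h" if "h \<in> H" for h
    using reach_plus[OF that infinity_in] plus_infinity[OF that] plus_comm infinity_in that by metis
qed (fact infinity_in)

lemma Gmin_eq: "Gmin H pl z V = rclass H V infinity"
  unfolding Gmin_def ..

lemma qmap_eq: "qmap H pl z I h = (if h \<in> I then infinity else h)"
  unfolding qmap_def ..

lemma qmap_Gmin_eq_if_qmap_subminimal_eq:
  assumes "h \<in> H" "h' \<in> H"
    and eq: "\<forall>C. subminimal H pl z V C \<longrightarrow> qmap H pl z (I_ge H V C) h = qmap H pl z (I_ge H V C) h'"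
  shows "qmap H pl z (I_gt H V (Gmin H pl z V)) h = qmap H pl z (I_gt H V (Gmin H pl z V)) h'"
proof -
  have separated: "g' = g" if g: "g \<in> H" "g' \<in> H" "\<not> reach V g infinity"
    and g_eq: "\<forall>C. subminimal H pl z V C \<longrightarrow> qmap H pl z (I_ge H V C) g = qmap H pl z (I_ge H V C) g'"
    for g g'
  proof -
    obtain c where c: "minimal_above_bottom c" "reach V c g"
      using exists_minimal_above_bottom_below[OF finite_carrier g(1,3)] by blast
    then have "c \<in> H" "subminimal H pl z V (rclass H V c)"
      using subminimal_rclass_iff[OF Gmin_eq] unfolding minimal_above_bottom_def by auto
    moreover from this have "g \<notin> I_ge H V (rclass H V c)"
      using mem_I_ge_rclass_iff g(1) c(2) by blast
    moreover have "g \<noteq> infinity"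
      using g reach_refl by blast
    ultimately show "g' = g"
      using g_eq by (auto simp: qmap_eq split: if_splits)
  qed
  show ?thesis
  proof (cases "reach V h infinity \<and> reach V h' infinity")
    case True
    with assms(1,2) show ?thesis
      using mem_I_gt_bottom_iff by (simp add: Gmin_eq qmap_eq)
  next
    case False
    with assms separated[of h h'] separated[of h' h] show ?thesis
      by (metis (no_types, lifting))
  qed
qed

lemma factors_through_subminimal_quotients:
  assumes "\<And>s. aH s \<in> H"
  shows "factors_through
           (alpha_quot H pl z (I_gt H V (Gmin H pl z V)) aH)
           (\<lambda>s. \<lambda>C\<in>{C. subminimal H pl z V C}. alpha_quot H pl z (I_ge H V C) aH s)"
  unfolding factors_through_def alpha_quot_def
  by (metis (mono_tags, lifting) assms mem_Collect_eq restrict_apply' qmap_Gmin_eq_if_qmap_subminimal_eq)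

end

locale subminimal_quotient = idem_comm_forest_algebra +
  fixes c
  assumes c_in: "c \<in> H"
    and c_not_below_infinity: "\<not> reach V c infinity"
begin

abbreviation "I_c \<equiv> I_ge H V (rclass H V c)"
abbreviation "H_c \<equiv> quot_H H pl z I_c"
abbreviation "pl_c \<equiv> quot_plus H pl z I_c"
abbreviation "z_c \<equiv> quot_zero H pl z I_c"
abbreviation "V_c \<equiv> quot_V H pl z I_c V"
abbreviation "q_c \<equiv> qmap H pl z I_c"

lemma mem_I_c_iff: "h \<in> H \<Longrightarrow> h \<in> I_c \<longleftrightarrow> \<not> reach V c h"
  using mem_I_ge_rclass_iff[OF c_in] .

lemma mem_H_c_iff: "x \<in> H_c \<longleftrightarrow> x = infinity \<or> (x \<in> H \<and> reach V c x)"
  using mem_I_c_iff unfolding quot_H_def I_ge_def by blast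

lemma H_c_subset: "H_c \<subseteq> H"
  unfolding quot_H_def I_ge_def using infinity_in by blast

lemma c_in_H_c: "c \<in> H_c"
  using mem_H_c_iff c_in reach_refl by blast

lemma q_c_infinity: "q_c infinity = infinity"
  by (simp add: qmap_eq)

lemma q_c_in: "h \<in> H \<Longrightarrow> q_c h \<in> H_c"
  using mem_H_c_iff mem_I_c_iff by (simp add: qmap_eq)

lemma q_c_plus_q_c:
  assumes "x \<in> H" "a \<in> H"
  shows "q_c (pl x (q_c a)) = q_c (pl x a)"
proof (cases "a \<in> I_c")
  case True
  then have "pl x a \<in> I_c"
    using I_ge_downward_closed reach_plus assms plus_closed unfolding rclass_def by blast
  with True show ?thesis
    using plus_infinity assms by (simp add: qmap_eq)
qed (simp add: qmap_eq)

lemma pl_c_eq: "pl_c x y = q_c (pl x y)"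
  unfolding quot_plus_def ..

lemma infty_quotient: "infty H_c pl_c z_c = infinity"
proof -
  have closed: "\<forall>x\<in>H_c. \<forall>y\<in>H_c. pl_c x y \<in> H_c"
    using H_c_subset plus_closed q_c_in by (auto simp: pl_c_eq)
  have left_comm: "\<forall>x\<in>H_c. \<forall>y\<in>H_c. \<forall>b\<in>H_c. pl_c x (pl_c y b) = pl_c y (pl_c x b)"
    using H_c_subset plus_closed plus_left_comm by (auto simp: pl_c_eq q_c_plus_q_c subset_iff)
  have left_idem: "\<forall>x\<in>H_c. \<forall>b\<in>H_c. pl_c x (pl_c x b) = pl_c x b"
    using H_c_subset plus_closed plus_left_idem by (auto simp: pl_c_eq q_c_plus_q_c subset_iff)
  have "z_c \<in> H_c"
    unfolding quot_zero_def using q_c_in zero_in .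
  then have F: "infty H_c pl_c z_c \<in> H_c" "pl_c infinity (infty H_c pl_c z_c) = infty H_c pl_c z_c"
    using fold_left_idem_absorbing[OF finite_subset[OF H_c_subset finite_carrier] _ closed left_comm left_idem]
      mem_H_c_iff unfolding infty_def by auto
  \<comment> \<open>\<infinity> is absorbing in H_c too, and two absorbing elements coincide\<close>
  moreover have "pl_c infinity (infty H_c pl_c z_c) = infinity"
    using F(1) H_c_subset infinity_plus q_c_infinity by (auto simp: pl_c_eq)
  ultimately show ?thesis by simp
qed

lemma reach_V_c_iff:
  assumes "g \<in> H_c" "h \<in> H_c"
  shows "reach V_c g h \<longleftrightarrow> g = infinity \<or> reach V g h"
proof -
  have "reach V_c g h \<longleftrightarrow> (\<exists>v\<in>V. g = q_c (v h))"
    using assms(2) unfolding reach_def quot_V_def by auto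
  also have "\<dots> \<longleftrightarrow> g = infinity \<or> reach V g h"
  proof
    assume "\<exists>v\<in>V. g = q_c (v h)"
    then obtain v where "v \<in> V" "g = q_c (v h)" by blast
    then show "g = infinity \<or> reach V g h"
      unfolding reach_def by (cases "v h \<in> I_c") (auto simp: qmap_eq)
  next
    have absorb: "restrict (\<lambda>x. pl x infinity) H \<in> V" "q_c (restrict (\<lambda>x. pl x infinity) H h) = infinity"
      using plus_actions infinity_in plus_infinity assms(2) H_c_subset q_c_infinity by auto
    assume "g = infinity \<or> reach V g h"
    moreover have "q_c g = g" if "g \<noteq> infinity"
      using assms(1) that unfolding quot_H_def by (simp add: qmap_eq)
    ultimately show "\<exists>v\<in>V. g = q_c (v h)"
      using absorb unfolding reach_def by metis
  qed
  finally show ?thesis .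
qed

sublocale quotient: reach_preorder_bottom H_c V_c infinity
proof
  show "reach V_c h h" if "h \<in> H_c" for h
    using that reach_V_c_iff reach_refl H_c_subset by blast
  show "reach V_c a d"
    if ab: "reach V_c a b" and bd: "reach V_c b d" and abd: "a \<in> H_c" "b \<in> H_c" "d \<in> H_c" for a b d
  proof (cases "a = infinity")
    case True
    with abd show ?thesis using reach_V_c_iff by blast
  next
    case False
    with ab abd have "reach V a b" "reach V c a" "a \<in> H"
      using reach_V_c_iff mem_H_c_iff by auto
    moreover from calculation have "b \<noteq> infinity"
      using c_not_below_infinity reach_trans c_in infinity_in by blast
    ultimately show ?thesis
      using bd abd reach_V_c_iff reach_trans H_c_subset by blast
  qed
  show "infinity \<in> H_c"
    using mem_H_c_iff by blast
  show "reach V_c infinity h" if "h \<in> H_c" for h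
    using that reach_V_c_iff mem_H_c_iff by blast
qed

lemma not_below_infinity_quotient_iff:
  assumes "x \<in> H_c"
  shows "\<not> reach V_c x infinity \<longleftrightarrow> x \<noteq> infinity"
proof
  assume "\<not> reach V_c x infinity"
  then show "x \<noteq> infinity"
    using quotient.reach_bottom[OF assms] by blast
next
  assume "x \<noteq> infinity"
  with assms have "x \<in> H" "reach V c x"
    using mem_H_c_iff by auto
  then have "\<not> reach V x infinity"
    using c_not_below_infinity reach_trans c_in infinity_in by blast
  with \<open>x \<noteq> infinity\<close> show "\<not> reach V_c x infinity"
    using reach_V_c_iff assms quotient.bottom_in by blast
qed

lemma minimal_above_bottom_quotient_iff:
  "quotient.minimal_above_bottom x \<longleftrightarrow> x \<in> H_c \<and> reach V_c x c \<and> reach V_c c x"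
proof -
  have c_above: "reach V_c c y" if "y \<in> H_c" "y \<noteq> infinity" for y
    using that mem_H_c_iff reach_V_c_iff c_in_H_c by blast
  have c_minimal: "quotient.minimal_above_bottom c"
    unfolding quotient.minimal_above_bottom_def
    using c_in_H_c not_below_infinity_quotient_iff c_above quotient.reach_refl c_not_below_infinity c_in reach_refl
    by metis
  show ?thesis
  proof
    assume x: "quotient.minimal_above_bottom x"
    then have "x \<in> H_c" "reach V_c c x"
      using c_above not_below_infinity_quotient_iff unfolding quotient.minimal_above_bottom_def by auto
    with x c_minimal c_in_H_c show "x \<in> H_c \<and> reach V_c x c \<and> reach V_c c x"
      unfolding quotient.minimal_above_bottom_def by blast
  next
    assume "x \<in> H_c \<and> reach V_c x c \<and> reach V_c c x"
    with c_minimal c_in_H_c show "quotient.minimal_above_bottom x"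
      unfolding quotient.minimal_above_bottom_def using quotient.reach_trans quotient.bottom_in by meson
  qed
qed

lemma ex1_subminimal_quotient: "\<exists>!D. subminimal H_c pl_c z_c V_c D"
proof -
  have Gmin_c: "Gmin H_c pl_c z_c V_c = rclass H_c V_c infinity"
    unfolding Gmin_def infty_quotient ..
  have "subminimal H_c pl_c z_c V_c D \<longleftrightarrow> D = rclass H_c V_c c" for D
    using quotient.subminimal_iff[OF Gmin_c] minimal_above_bottom_quotient_iff
      quotient.rclass_eq_iff c_in_H_c by metis
  then show ?thesis by blast
qed

end

lemma (in idem_comm_forest_algebra) ex1_subminimal_quotient_by_subminimal:
  assumes "subminimal H pl z V C"
  shows "\<exists>!D. subminimal (quot_H H pl z (I_ge H V C)) (quot_plus H pl z (I_ge H V C))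
                (quot_zero H pl z (I_ge H V C)) (quot_V H pl z (I_ge H V C) V) D"
proof -
  obtain c where c: "minimal_above_bottom c" "C = rclass H V c"
    using subminimal_iff[OF Gmin_eq] assms by blast
  then interpret subminimal_quotient H pl z V c
    by unfold_locales (simp_all add: minimal_above_bottom_def)
  from c show ?thesis
    using ex1_subminimal_quotient by simp
qed

theorem lemma2:
  fixes aH :: "'a forest \<Rightarrow> 'h" and aV :: "'a ctx \<Rightarrow> ('h \<Rightarrow> 'h)"
    and H :: "'h set" and pl :: "'h \<Rightarrow> 'h \<Rightarrow> 'h" and z :: 'h and V :: "('h \<Rightarrow> 'h) set"
  assumes "forest_algebra H pl z V"
    and "finite H" and "finite V"
    and "forest_hom aH aV H pl z V"
    and "\<forall>x\<in>H. pl x x = x"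
    and "\<forall>x\<in>H. \<forall>y\<in>H. pl x y = pl y x"
  shows "factors_through
           (alpha_quot H pl z (I_gt H V (Gmin H pl z V)) aH)
           (\<lambda>s. \<lambda>C\<in>{C. subminimal H pl z V C}. alpha_quot H pl z (I_ge H V C) aH s)
       \<and> (\<forall>C. subminimal H pl z V C \<longrightarrow>
            (\<exists>!D. subminimal (quot_H H pl z (I_ge H V C)) (quot_plus H pl z (I_ge H V C))
                     (quot_zero H pl z (I_ge H V C)) (quot_V H pl z (I_ge H V C) V) D))"
proof -
  interpret idem_comm_forest_algebra H pl z V
    using assms(1,2,5,6) by unfold_locales
  have "aH s \<in> H" for s
    using assms(4) unfolding forest_hom_def by blast
  then show ?thesis
    using factors_through_subminimal_quotients ex1_subminimal_quotient_by_subminimal by blast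
qed

end
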